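(* Let $A,B$ be rings with local units and $f:A\to B$ a ring homomorphism. The following are equivalent: (1) $f$ is non-degenerate; (2) $f$ extends to a strictly continuous unital ring homomorphism $\varphi:M(A)\to M(B)$ (i.e. $\varphi\circ\mu_A=\mu_B\circ f$). Furthermore, in this case there exists a unique ring homomorphism $M(A)\to M(B)$ extending $f$.
   Context: Rings are associative, not necessarily unital. A ring $A$ has local units if for every $a\in A$ there exist $e,e'\in A$ with $ae=e'a=a$. The multiplier ring $M(A)$ of such $A$ consists of pairs $m=(L,R)$ of additive maps $A\to A$, written $L(a)=ma$, $R(a)=am$, satisfying $m(ab)=(ma)b$, $(ab)m=a(bm)$ and $a(mb)=(am)b$ for all $a,b\in A$; addition is pointwise and multiplication is composition of these actions, making $M(A)$ a unital ring. The map $\mu_A:A\to M(A)$ sending $\xi$ to left and right multiplication by $\xi$ is an injective ring homomorphism identifying $A$ with an ideal of $M(A)$. The strict topology on $M(A)$ is the weakest topology making the maps $m\mapsto ma$ and $m\mapsto am$ continuous for each $a\in A$, where $A$ carries the discrete topology. For subrings $X,Y$ of a ring, $XY$ denotes the additive subgroup generated by products $xy$. A ring homomorphism $f:A\to B$ between rings with local units is non-degenerate if $f(A)B=Bf(A)=B$. *)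

theory Defs
  imports "HOL-Analysis.Analysis"
begin

definition has_local_units :: "'a::ring itself \<Rightarrow> bool" where
  "has_local_units _ \<longleftrightarrow> (\<forall>a::'a. \<exists>e e'. a * e = a \<and> e' * a = a)"

definition is_ring_hom :: "('a::ring \<Rightarrow> 'b::ring) \<Rightarrow> bool" where
  "is_ring_hom f \<longleftrightarrow> (\<forall>x y. f (x + y) = f x + f y \<and> f (x * y) = f x * f y)"

definition add_subgroup_gen :: "'a::ab_group_add set \<Rightarrow> 'a set" where
  "add_subgroup_gen S = \<Inter>{H. 0 \<in> H \<and> (\<forall>x\<in>H. \<forall>y\<in>H. x - y \<in> H) \<and> S \<subseteq> H}"

definition non_degenerate :: "('a::ring \<Rightarrow> 'b::ring) \<Rightarrow> bool" where
  "non_degenerate f \<longleftrightarrow>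
     add_subgroup_gen {f a * b | a b. True} = UNIV \<and>
     add_subgroup_gen {b * f a | a b. True} = UNIV"

text \<open>Multipliers: pairs (L,R) with L a = m a, R a = a m.\<close>
type_synonym 'a mult = "('a \<Rightarrow> 'a) \<times> ('a \<Rightarrow> 'a)"

definition multipliers :: "'a::ring itself \<Rightarrow> 'a mult set" where
  "multipliers _ = {(L, R). (\<forall>a b. L (a + b) = L a + L b) \<and> (\<forall>a b. R (a + b) = R a + R b)
      \<and> (\<forall>a b::'a. L (a * b) = L a * b) \<and> (\<forall>a b::'a. R (a * b) = a * R b)
      \<and> (\<forall>a b::'a. a * L b = R a * b)}"

definition mult_add :: "'a::ring mult \<Rightarrow> 'a mult \<Rightarrow> 'a mult" where
  "mult_add m n = ((\<lambda>a. fst m a + fst n a), (\<lambda>a. snd m a + snd n a))"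

text \<open>(mn)a = m(na), a(mn) = (am)n\<close>
definition mult_mul :: "'a::ring mult \<Rightarrow> 'a mult \<Rightarrow> 'a mult" where
  "mult_mul m n = (fst m \<circ> fst n, snd n \<circ> snd m)"

definition mult_one :: "'a::ring mult" where
  "mult_one = (id, id)"

definition mu :: "'a::ring \<Rightarrow> 'a mult" where
  "mu \<xi> = ((\<lambda>a. \<xi> * a), (\<lambda>a. a * \<xi>))"

text \<open>Strict topology: weakest topology on M(A) making m \<mapsto> ma, m \<mapsto> am continuous
  into discrete A (generated by the subbase of preimages of points).\<close>
definition strict_topology :: "'a::ring itself \<Rightarrow> 'a mult topology" where
  "strict_topology T = topology_generated_by
     ({{m \<in> multipliers T. fst m a = c} | a c. True} \<union>
      {{m \<in> multipliers T. snd m a = c} | a c. True})"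

definition mult_ring_hom :: "'a::ring itself \<Rightarrow> 'b::ring itself \<Rightarrow> ('a mult \<Rightarrow> 'b mult) \<Rightarrow> bool" where
  "mult_ring_hom TA TB \<phi> \<longleftrightarrow>
     (\<forall>m\<in>multipliers TA. \<phi> m \<in> multipliers TB) \<and>
     (\<forall>m\<in>multipliers TA. \<forall>n\<in>multipliers TA.
        \<phi> (mult_add m n) = mult_add (\<phi> m) (\<phi> n) \<and> \<phi> (mult_mul m n) = mult_mul (\<phi> m) (\<phi> n))"

definition extends_hom :: "('a::ring \<Rightarrow> 'b::ring) \<Rightarrow> ('a mult \<Rightarrow> 'b mult) \<Rightarrow> bool" where
  "extends_hom f \<phi> \<longleftrightarrow> (\<forall>\<xi>. \<phi> (mu \<xi>) = mu (f \<xi>))"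

end

theory Submission
  imports Defs
begin

text \<open>When \<open>A\<close> has local units, \<open>f\<close> is non-degenerate iff every \<open>b \<in> B\<close> satisfies
  \<open>f u * b = b = b * f u\<close> for some \<open>u \<in> A\<close>: an element of \<open>f(A)B\<close> is a finite sum of
  terms \<open>f a * c\<close>, all fixed by \<open>f u\<close> for a common local unit \<open>u\<close> of the \<open>a\<close>'s.
  Given such units, a multiplier \<open>m\<close> acts on \<open>b\<close> by \<open>f (m u) * b\<close>. This is well defined
  because no nonzero element of \<open>B\<close> is annihilated by all of \<open>f(A)\<close>; it is forced on every
  extension \<open>\<psi>\<close>, since \<open>\<psi> m b = \<psi> m (\<psi> u b) = \<psi> (m u) b\<close>; and it is strictly continuous
  because it only depends on \<open>m u\<close>. Conversely, the identity multiplier lies in the strict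
  closure of \<open>A\<close>, so a strictly continuous unital extension \<open>\<phi>\<close> maps some local unit \<open>u\<close>
  of \<open>A\<close> close enough to the identity that \<open>f u * b = b = b * f u\<close>.\<close>

section \<open>Rings with local units\<close>

lemma finite_left_local_unit:
  fixes S :: "'a::ring set"
  assumes "has_local_units TYPE('a)" "finite S"
  shows "\<exists>u. \<forall>a\<in>S. u * a = a"
  using assms(2)
proof (induction S rule: finite_induct)
  case empty
  then show ?case by simp
next
  case (insert x S)
  then obtain u where u: "\<forall>a\<in>S. u * a = a" by blast
  obtain e where e: "e * (x - u * x) = x - u * x"
    using assms(1) unfolding has_local_units_def by blast
  \<comment> \<open>formally \<open>1 - (u + e - e * u) = (1 - e) * (1 - u)\<close>\<close>
  have "(u + e - e * u) * a = a" if "a \<in> insert x S" for a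
  proof -
    have "(u + e - e * u) * a = u * a + e * (a - u * a)"
      by (simp add: algebra_simps mult.assoc)
    also have "\<dots> = a"
      using that u e by (cases "a = x") auto
    finally show ?thesis .
  qed
  then show ?case by blast
qed

lemma finite_right_local_unit:
  fixes S :: "'a::ring set"
  assumes "has_local_units TYPE('a)" "finite S"
  shows "\<exists>u. \<forall>a\<in>S. a * u = a"
  using assms(2)
proof (induction S rule: finite_induct)
  case empty
  then show ?case by simp
next
  case (insert x S)
  then obtain u where u: "\<forall>a\<in>S. a * u = a" by blast
  obtain e where e: "(x - x * u) * e = x - x * u"
    using assms(1) unfolding has_local_units_def by blast
  have "a * (u + e - u * e) = a" if "a \<in> insert x S" for a
  proof -
    have "a * (u + e - u * e) = a * u + (a - a * u) * e"
      by (simp add: algebra_simps mult.assoc)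
    also have "\<dots> = a"
      using that u e by (cases "a = x") auto
    finally show ?thesis .
  qed
  then show ?case by blast
qed

lemma finite_local_unit:
  fixes S :: "'a::ring set"
  assumes "has_local_units TYPE('a)" "finite S"
  shows "\<exists>w. \<forall>a\<in>S. w * a = a \<and> a * w = a"
proof -
  obtain u where u: "\<forall>a\<in>S. u * a = a" using finite_left_local_unit[OF assms] by blast
  obtain v where v: "\<forall>a\<in>S. a * v = a" using finite_right_local_unit[OF assms] by blast
  have "(u + v - v * u) * a = a \<and> a * (u + v - v * u) = a" if "a \<in> S" for a
  proof -
    have "(u + v - v * u) * a = u * a + v * a - v * (u * a)"
      and "a * (u + v - v * u) = a * u + a * v - (a * v) * u"
      by (simp_all add: algebra_simps mult.assoc)
    with that u v show ?thesis by simp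
  qed
  then show ?thesis by blast
qed

section \<open>Non-degenerate homomorphisms\<close>

lemma add_subgroup_gen_induct [consumes 1, case_names zero diff gen]:
  assumes "x \<in> add_subgroup_gen S" "P 0" "\<And>x y. P x \<Longrightarrow> P y \<Longrightarrow> P (x - y)"
    "\<And>s. s \<in> S \<Longrightarrow> P s"
  shows "P x"
proof -
  have "{x. P x} \<in> {H. 0 \<in> H \<and> (\<forall>x\<in>H. \<forall>y\<in>H. x - y \<in> H) \<and> S \<subseteq> H}"
    using assms(2-4) by auto
  with assms(1) have "x \<in> {x. P x}"
    unfolding add_subgroup_gen_def by (rule InterD)
  then show ?thesis by simp
qed

lemma subset_add_subgroup_gen: "S \<subseteq> add_subgroup_gen S"
  unfolding add_subgroup_gen_def by (rule Inter_greatest) simp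

lemma is_ring_hom_add: "is_ring_hom f \<Longrightarrow> f (x + y) = f x + f y"
  and is_ring_hom_mult: "is_ring_hom f \<Longrightarrow> f (x * y) = f x * f y"
  unfolding is_ring_hom_def by blast+

definition image_has_local_units :: "('a::ring \<Rightarrow> 'b::ring) \<Rightarrow> bool" where
  "image_has_local_units f \<longleftrightarrow> (\<forall>b. \<exists>u. f u * b = b \<and> b * f u = b)"

lemma fixed_by_image_of_left_units:
  assumes "is_ring_hom f" "b \<in> add_subgroup_gen {f a * c | a c. True}"
  shows "\<exists>S. finite S \<and> (\<forall>u. (\<forall>a\<in>S. u * a = a) \<longrightarrow> f u * b = b)"
  using assms(2)
proof (induction rule: add_subgroup_gen_induct)
  case zero
  show ?case by (intro exI[of _ "{}"]) simp
next
  case (diff x y)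
  then obtain S T where "finite S" "\<forall>u. (\<forall>a\<in>S. u * a = a) \<longrightarrow> f u * x = x"
    and "finite T" "\<forall>u. (\<forall>a\<in>T. u * a = a) \<longrightarrow> f u * y = y"
    by blast
  then have "finite (S \<union> T) \<and> (\<forall>u. (\<forall>a\<in>S \<union> T. u * a = a) \<longrightarrow> f u * (x - y) = x - y)"
    by (simp add: right_diff_distrib)
  then show ?case by blast
next
  case (gen s)
  then obtain a c where s: "s = f a * c" by blast
  have "f u * s = s" if "u * a = a" for u
    using that by (simp add: s is_ring_hom_mult[OF assms(1), symmetric] mult.assoc[symmetric])
  then show ?case by (intro exI[of _ "{a}"]) simp
qed

lemma fixed_by_image_of_right_units:
  assumes "is_ring_hom f" "b \<in> add_subgroup_gen {c * f a | a c. True}"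
  shows "\<exists>S. finite S \<and> (\<forall>u. (\<forall>a\<in>S. a * u = a) \<longrightarrow> b * f u = b)"
  using assms(2)
proof (induction rule: add_subgroup_gen_induct)
  case zero
  show ?case by (intro exI[of _ "{}"]) simp
next
  case (diff x y)
  then obtain S T where "finite S" "\<forall>u. (\<forall>a\<in>S. a * u = a) \<longrightarrow> x * f u = x"
    and "finite T" "\<forall>u. (\<forall>a\<in>T. a * u = a) \<longrightarrow> y * f u = y"
    by blast
  then have "finite (S \<union> T) \<and> (\<forall>u. (\<forall>a\<in>S \<union> T. a * u = a) \<longrightarrow> (x - y) * f u = x - y)"
    by (simp add: left_diff_distrib)
  then show ?case by blast
next
  case (gen s)
  then obtain a c where s: "s = c * f a" by blast
  have "s * f u = s" if "a * u = a" for u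
    using that by (simp add: s is_ring_hom_mult[OF assms(1), symmetric] mult.assoc)
  then show ?case by (intro exI[of _ "{a}"]) simp
qed

lemma non_degenerate_iff_image_has_local_units:
  fixes f :: "'a::ring \<Rightarrow> 'b::ring"
  assumes "has_local_units TYPE('a)" "is_ring_hom f"
  shows "non_degenerate f \<longleftrightarrow> image_has_local_units f"
proof
  assume nd: "non_degenerate f"
  show "image_has_local_units f"
    unfolding image_has_local_units_def
  proof
    fix b
    have "b \<in> add_subgroup_gen {f a * c | a c. True}" "b \<in> add_subgroup_gen {c * f a | a c. True}"
      using nd unfolding non_degenerate_def by simp_all
    then obtain S T where S: "finite S" "\<forall>u. (\<forall>a\<in>S. u * a = a) \<longrightarrow> f u * b = b"
      and T: "finite T" "\<forall>u. (\<forall>a\<in>T. a * u = a) \<longrightarrow> b * f u = b"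
      using fixed_by_image_of_left_units[OF assms(2)] fixed_by_image_of_right_units[OF assms(2)]
      by blast
    obtain w where "\<forall>a\<in>S \<union> T. w * a = a \<and> a * w = a"
      using finite_local_unit[OF assms(1) finite_UnI[OF S(1) T(1)]] by blast
    with S(2) T(2) show "\<exists>u. f u * b = b \<and> b * f u = b" by blast
  qed
next
  assume units: "image_has_local_units f"
  have "b \<in> {f a * c | a c. True} \<and> b \<in> {c * f a | a c. True}" for b
  proof -
    obtain u where "f u * b = b" "b * f u = b"
      using units unfolding image_has_local_units_def by blast
    then show ?thesis by (auto intro!: exI[of _ u] exI[of _ b])
  qed
  then show "non_degenerate f"
    unfolding non_degenerate_def using subset_add_subgroup_gen by blast
qed

section \<open>Multipliers\<close>

lemma mem_multipliers_iff:
  "m \<in> multipliers T \<longleftrightarrow>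
     (\<forall>a b. fst m (a + b) = fst m a + fst m b) \<and> (\<forall>a b. snd m (a + b) = snd m a + snd m b)
     \<and> (\<forall>a b. fst m (a * b) = fst m a * b) \<and> (\<forall>a b. snd m (a * b) = a * snd m b)
     \<and> (\<forall>a b. a * fst m b = snd m a * b)"
  by (cases m) (simp add: multipliers_def)

lemma multipliersD:
  assumes "m \<in> multipliers T"
  shows multipliers_left_add: "fst m (a + b) = fst m a + fst m b"
    and multipliers_right_add: "snd m (a + b) = snd m a + snd m b"
    and multipliers_left_mult: "fst m (a * b) = fst m a * b"
    and multipliers_right_mult: "snd m (a * b) = a * snd m b"
    and multipliers_middle: "a * fst m b = snd m a * b"
  using assms unfolding mem_multipliers_iff by blast+

lemma mu_in_multipliers: "mu \<xi> \<in> multipliers TYPE('a::ring)"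
  unfolding mu_def multipliers_def by (simp add: distrib_left distrib_right mult.assoc)

lemma mult_one_in_multipliers: "mult_one \<in> multipliers T"
  unfolding mult_one_def multipliers_def by simp

lemma mult_mul_in_multipliers:
  assumes "m \<in> multipliers T" "n \<in> multipliers T"
  shows "mult_mul m n \<in> multipliers T"
  using multipliersD[OF assms(1)] multipliersD[OF assms(2)]
  unfolding mem_multipliers_iff mult_mul_def by simp

lemma mult_mul_mu_right: "m \<in> multipliers TYPE('a::ring) \<Longrightarrow> mult_mul m (mu a) = mu (fst m a)"
  unfolding mult_mul_def mu_def
  by (simp add: fun_eq_iff multipliers_left_mult multipliers_middle[symmetric] mult.assoc)

lemma mult_mul_mu_left: "m \<in> multipliers TYPE('a::ring) \<Longrightarrow> mult_mul (mu a) m = mu (snd m a)"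
  unfolding mult_mul_def mu_def
  by (simp add: fun_eq_iff multipliers_right_mult multipliers_middle mult.assoc)

section \<open>The strict topology\<close>

definition strict_subbasis :: "'a::ring itself \<Rightarrow> 'a mult set set" where
  "strict_subbasis T =
     {{m \<in> multipliers T. fst m a = c} | a c. True} \<union> {{m \<in> multipliers T. snd m a = c} | a c. True}"

lemma strict_topology_eq_generated:
  "strict_topology T = topology_generated_by (strict_subbasis T)"
  unfolding strict_topology_def strict_subbasis_def ..

lemma Union_strict_subbasis: "\<Union>(strict_subbasis T) = multipliers T"
proof
  show "\<Union>(strict_subbasis T) \<subseteq> multipliers T"
    unfolding strict_subbasis_def by blast
  show "multipliers T \<subseteq> \<Union>(strict_subbasis T)"
  proof
    fix m assume "m \<in> multipliers T"
    then have "m \<in> {n \<in> multipliers T. fst n 0 = fst m 0}" by simp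
    moreover have "{n \<in> multipliers T. fst n 0 = fst m 0} \<in> strict_subbasis T"
      unfolding strict_subbasis_def by blast
    ultimately show "m \<in> \<Union>(strict_subbasis T)" by blast
  qed
qed

lemma topspace_strict_topology [simp]: "topspace (strict_topology T) = multipliers T"
  by (simp add: strict_topology_eq_generated Union_strict_subbasis)

lemma openin_strict_topology_left:
  "openin (strict_topology T) {m \<in> multipliers T. fst m a \<in> X}"
proof -
  have "{m \<in> multipliers T. fst m a \<in> X} = \<Union>((\<lambda>c. {m \<in> multipliers T. fst m a = c}) ` X)"
    by auto
  moreover have "openin (strict_topology T) {m \<in> multipliers T. fst m a = c}" for c
    unfolding strict_topology_eq_generated
    by (rule topology_generated_by_Basis) (auto simp: strict_subbasis_def)
  ultimately show ?thesis by (auto intro!: openin_Union)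
qed

lemma openin_strict_topology_right:
  "openin (strict_topology T) {m \<in> multipliers T. snd m a \<in> X}"
proof -
  have "{m \<in> multipliers T. snd m a \<in> X} = \<Union>((\<lambda>c. {m \<in> multipliers T. snd m a = c}) ` X)"
    by auto
  moreover have "openin (strict_topology T) {m \<in> multipliers T. snd m a = c}" for c
    unfolding strict_topology_eq_generated
    by (rule topology_generated_by_Basis) (auto simp: strict_subbasis_def)
  ultimately show ?thesis by (auto intro!: openin_Union)
qed

lemma continuous_map_strict_topologyI:
  fixes g :: "'a::ring mult \<Rightarrow> 'b::ring mult"
  assumes "\<And>m. m \<in> multipliers TYPE('a) \<Longrightarrow> g m \<in> multipliers TYPE('b)"
    and "\<And>b c. openin (strict_topology TYPE('a)) {m \<in> multipliers TYPE('a). fst (g m) b = c}"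
    and "\<And>b c. openin (strict_topology TYPE('a)) {m \<in> multipliers TYPE('a). snd (g m) b = c}"
  shows "continuous_map (strict_topology TYPE('a)) (strict_topology TYPE('b)) g"
  unfolding strict_topology_eq_generated[of "TYPE('b)"]
proof (rule continuous_on_generated_topo)
  fix U assume "U \<in> strict_subbasis TYPE('b)"
  then obtain b c where
    "U = {n \<in> multipliers TYPE('b). fst n b = c} \<or> U = {n \<in> multipliers TYPE('b). snd n b = c}"
    unfolding strict_subbasis_def by blast
  then have "g -` U \<inter> topspace (strict_topology TYPE('a)) = {m \<in> multipliers TYPE('a). fst (g m) b = c}
      \<or> g -` U \<inter> topspace (strict_topology TYPE('a)) = {m \<in> multipliers TYPE('a). snd (g m) b = c}"
    using assms(1) by auto
  with assms(2,3) show "openin (strict_topology TYPE('a)) (g -` U \<inter> topspace (strict_topology TYPE('a)))"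
    by (elim disjE) simp_all
next
  show "g ` topspace (strict_topology TYPE('a)) \<subseteq> \<Union>(strict_subbasis TYPE('b))"
    using assms(1) by (auto simp: Union_strict_subbasis)
qed

lemma strict_topology_nhds:
  assumes "openin (strict_topology T) W" "m \<in> W"
  obtains S where "finite S"
    "\<And>n. n \<in> multipliers T \<Longrightarrow> \<forall>a\<in>S. fst n a = fst m a \<and> snd n a = snd m a \<Longrightarrow> n \<in> W"
proof -
  have "generate_topology_on (strict_subbasis T) W"
    using assms(1) by (simp add: strict_topology_eq_generated openin_topology_generated_by_iff)
  then have "\<exists>S. finite S \<and>
      (\<forall>n\<in>multipliers T. (\<forall>a\<in>S. fst n a = fst m a \<and> snd n a = snd m a) \<longrightarrow> n \<in> W)"
    using assms(2)
  proof (induction arbitrary: m)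
    case Empty
    then show ?case by simp
  next
    case (Int U V)
    obtain S1 where "finite S1"
      "\<forall>n\<in>multipliers T. (\<forall>a\<in>S1. fst n a = fst m a \<and> snd n a = snd m a) \<longrightarrow> n \<in> U"
      using Int.IH(1) Int.prems by blast
    moreover obtain S2 where "finite S2"
      "\<forall>n\<in>multipliers T. (\<forall>a\<in>S2. fst n a = fst m a \<and> snd n a = snd m a) \<longrightarrow> n \<in> V"
      using Int.IH(2) Int.prems by blast
    ultimately have "finite (S1 \<union> S2) \<and> (\<forall>n\<in>multipliers T.
        (\<forall>a\<in>S1 \<union> S2. fst n a = fst m a \<and> snd n a = snd m a) \<longrightarrow> n \<in> U \<inter> V)"
      by simp
    then show ?case by blast
  next
    case (UN K)
    then obtain k where "k \<in> K" "m \<in> k" by blast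
    with UN.IH obtain S where "finite S"
      "\<forall>n\<in>multipliers T. (\<forall>a\<in>S. fst n a = fst m a \<and> snd n a = snd m a) \<longrightarrow> n \<in> k"
      by blast
    with \<open>k \<in> K\<close> show ?case by blast
  next
    case (Basis s)
    then obtain a c where
      "s = {n \<in> multipliers T. fst n a = c} \<or> s = {n \<in> multipliers T. snd n a = c}"
      unfolding strict_subbasis_def by blast
    with Basis.prems have
      "\<forall>n\<in>multipliers T. (\<forall>a'\<in>{a}. fst n a' = fst m a' \<and> snd n a' = snd m a') \<longrightarrow> n \<in> s"
      by auto
    then show ?case by blast
  qed
  with that show ?thesis by blast
qed

section \<open>Extending non-degenerate homomorphisms to multipliers\<close>

locale multiplier_extension =
  fixes f :: "'a::ring \<Rightarrow> 'b::ring"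
  assumes hom: "is_ring_hom f" and image_units: "image_has_local_units f"
begin

definition unit_for :: "'b \<Rightarrow> 'a" where
  "unit_for b = (SOME u. f u * b = b \<and> b * f u = b)"

lemma unit_for: "f (unit_for b) * b = b" "b * f (unit_for b) = b"
  using someI_ex[of "\<lambda>u. f u * b = b \<and> b * f u = b"] image_units
  unfolding unit_for_def image_has_local_units_def by blast+

lemma left_cancel:
  assumes "\<And>a. f a * x = f a * y"
  shows "x = y"
proof -
  have "x - y = f (unit_for (x - y)) * (x - y)" by (simp only: unit_for)
  also have "\<dots> = 0" using assms by (simp add: right_diff_distrib)
  finally show ?thesis by simp
qed

lemma right_cancel:
  assumes "\<And>a. x * f a = y * f a"
  shows "x = y"
proof -
  have "x - y = (x - y) * f (unit_for (x - y))" by (simp only: unit_for)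
  also have "\<dots> = 0" using assms by (simp add: left_diff_distrib)
  finally show ?thesis by simp
qed

text \<open>A multiplier \<open>m\<close> acts on \<open>b = f u * b\<close> by \<open>m b = f (m u) * b\<close>; by the
  characterisations below and \<open>left_cancel\<close>, \<open>right_cancel\<close>, this does not depend on \<open>u\<close>.\<close>

definition extension :: "'a mult \<Rightarrow> 'b mult" where
  "extension m = ((\<lambda>b. f (fst m (unit_for b)) * b), (\<lambda>b. b * f (snd m (unit_for b))))"

lemma extension_left_char:
  assumes m: "m \<in> multipliers TYPE('a)"
  shows "f a * fst (extension m) b = f (snd m a) * b"
proof -
  let ?u = "unit_for b"
  have "f a * fst (extension m) b = f (a * fst m ?u) * b"
    by (simp add: extension_def is_ring_hom_mult[OF hom] mult.assoc)
  also have "\<dots> = f (snd m a) * (f ?u * b)"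
    by (simp add: multipliers_middle[OF m] is_ring_hom_mult[OF hom] mult.assoc)
  also have "\<dots> = f (snd m a) * b"
    by (simp only: unit_for)
  finally show ?thesis .
qed

lemma extension_right_char:
  assumes m: "m \<in> multipliers TYPE('a)"
  shows "snd (extension m) b * f a = b * f (fst m a)"
proof -
  let ?u = "unit_for b"
  have "snd (extension m) b * f a = b * f (snd m ?u * a)"
    by (simp add: extension_def is_ring_hom_mult[OF hom] mult.assoc)
  also have "\<dots> = (b * f ?u) * f (fst m a)"
    by (simp add: multipliers_middle[OF m, symmetric] is_ring_hom_mult[OF hom] mult.assoc)
  also have "\<dots> = b * f (fst m a)"
    by (simp only: unit_for)
  finally show ?thesis .
qed

lemma extension_middle:
  assumes m: "m \<in> multipliers TYPE('a)"
  shows "x * fst (extension m) y = snd (extension m) x * y"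
proof -
  let ?u = "unit_for x" and ?v = "unit_for y"
  have "x * fst (extension m) y = (x * f ?u) * f (fst m ?v) * y"
    by (simp add: extension_def unit_for mult.assoc)
  also have "\<dots> = x * f (?u * fst m ?v) * y"
    by (simp add: is_ring_hom_mult[OF hom] mult.assoc)
  also have "\<dots> = x * f (snd m ?u * ?v) * y"
    by (simp only: multipliers_middle[OF m])
  also have "\<dots> = x * f (snd m ?u) * (f ?v * y)"
    by (simp add: is_ring_hom_mult[OF hom] mult.assoc)
  also have "\<dots> = snd (extension m) x * y"
    by (simp add: extension_def unit_for)
  finally show ?thesis .
qed

lemma extension_in_multipliers:
  assumes m: "m \<in> multipliers TYPE('a)"
  shows "extension m \<in> multipliers TYPE('b)"
  unfolding mem_multipliers_iff
proof (intro conjI allI)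
  show "fst (extension m) (x + y) = fst (extension m) x + fst (extension m) y" for x y
    by (rule left_cancel) (simp add: extension_left_char[OF m] distrib_left)
  show "snd (extension m) (x + y) = snd (extension m) x + snd (extension m) y" for x y
    by (rule right_cancel) (simp add: extension_right_char[OF m] distrib_right)
  show "fst (extension m) (x * y) = fst (extension m) x * y" for x y
    by (rule left_cancel) (simp add: extension_left_char[OF m] mult.assoc[symmetric])
  show "snd (extension m) (x * y) = x * snd (extension m) y" for x y
    by (rule right_cancel) (simp add: extension_right_char[OF m] mult.assoc)
  show "x * fst (extension m) y = snd (extension m) x * y" for x y
    by (rule extension_middle[OF m])
qed

lemma extension_add: "extension (mult_add m n) = mult_add (extension m) (extension n)"
  unfolding extension_def mult_add_def
  by (simp add: is_ring_hom_add[OF hom] distrib_left distrib_right)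

lemma extension_mul:
  assumes m: "m \<in> multipliers TYPE('a)" and n: "n \<in> multipliers TYPE('a)"
  shows "extension (mult_mul m n) = mult_mul (extension m) (extension n)"
proof -
  have mn: "mult_mul m n \<in> multipliers TYPE('a)"
    using m n by (rule mult_mul_in_multipliers)
  have "fst (extension (mult_mul m n)) b = fst (extension m) (fst (extension n) b)" for b
    by (rule left_cancel)
      (simp add: extension_left_char[OF mn],
        simp add: extension_left_char[OF m] extension_left_char[OF n] mult_mul_def)
  moreover have "snd (extension (mult_mul m n)) b = snd (extension n) (snd (extension m) b)" for b
    by (rule right_cancel)
      (simp add: extension_right_char[OF mn],
        simp add: extension_right_char[OF m] extension_right_char[OF n] mult_mul_def)
  ultimately show ?thesis
    by (simp add: mult_mul_def prod_eq_iff fun_eq_iff)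
qed

lemma extension_mult_ring_hom: "mult_ring_hom TYPE('a) TYPE('b) extension"
  unfolding mult_ring_hom_def
  using extension_in_multipliers extension_add extension_mul by blast

lemma extension_mult_one: "extension mult_one = mult_one"
  unfolding extension_def mult_one_def by (simp add: fun_eq_iff unit_for)

lemma extension_extends_hom: "extends_hom f extension"
  unfolding extends_hom_def
proof
  fix \<xi>
  have "f (\<xi> * unit_for b) * b = f \<xi> * b" for b
    by (simp add: is_ring_hom_mult[OF hom] mult.assoc unit_for)
  moreover have "b * f (unit_for b * \<xi>) = b * f \<xi>" for b
    by (simp add: is_ring_hom_mult[OF hom] mult.assoc[symmetric] unit_for)
  ultimately show "extension (mu \<xi>) = mu (f \<xi>)"
    unfolding extension_def mu_def by (simp add: fun_eq_iff)
qed

lemma continuous_map_extension: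
  "continuous_map (strict_topology TYPE('a)) (strict_topology TYPE('b)) extension"
proof (rule continuous_map_strict_topologyI)
  show "extension m \<in> multipliers TYPE('b)" if "m \<in> multipliers TYPE('a)" for m
    using that by (rule extension_in_multipliers)
  show "openin (strict_topology TYPE('a)) {m \<in> multipliers TYPE('a). fst (extension m) b = c}" for b c
    using openin_strict_topology_left[of "TYPE('a)" "unit_for b" "{x. f x * b = c}"]
    by (simp add: extension_def)
  show "openin (strict_topology TYPE('a)) {m \<in> multipliers TYPE('a). snd (extension m) b = c}" for b c
    using openin_strict_topology_right[of "TYPE('a)" "unit_for b" "{x. b * f x = c}"]
    by (simp add: extension_def)
qed

lemma extension_unique:
  assumes \<psi>: "mult_ring_hom TYPE('a) TYPE('b) \<psi>" "extends_hom f \<psi>"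
    and m: "m \<in> multipliers TYPE('a)"
  shows "\<psi> m = extension m"
proof -
  have \<psi>_mu: "\<psi> (mu \<xi>) = mu (f \<xi>)" for \<xi>
    using \<psi>(2) unfolding extends_hom_def by blast
  have \<psi>_mul: "\<psi> (mult_mul p q) = mult_mul (\<psi> p) (\<psi> q)"
    if "p \<in> multipliers TYPE('a)" "q \<in> multipliers TYPE('a)" for p q
    using \<psi>(1) that unfolding mult_ring_hom_def by blast
  have "fst (\<psi> m) b = fst (extension m) b" for b
  proof -
    let ?u = "unit_for b"
    have "fst (\<psi> m) b = fst (mult_mul (\<psi> m) (mu (f ?u))) b"
      by (simp add: mult_mul_def mu_def unit_for)
    also have "\<dots> = fst (\<psi> (mult_mul m (mu ?u))) b"
      by (simp only: \<psi>_mul[OF m mu_in_multipliers] \<psi>_mu)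
    also have "\<dots> = fst (extension m) b"
      by (simp only: mult_mul_mu_right[OF m] \<psi>_mu) (simp add: mu_def extension_def)
    finally show ?thesis .
  qed
  moreover have "snd (\<psi> m) b = snd (extension m) b" for b
  proof -
    let ?u = "unit_for b"
    have "snd (\<psi> m) b = snd (mult_mul (mu (f ?u)) (\<psi> m)) b"
      by (simp add: mult_mul_def mu_def unit_for)
    also have "\<dots> = snd (\<psi> (mult_mul (mu ?u) m)) b"
      by (simp only: \<psi>_mul[OF mu_in_multipliers m] \<psi>_mu)
    also have "\<dots> = snd (extension m) b"
      by (simp only: mult_mul_mu_left[OF m] \<psi>_mu) (simp add: mu_def extension_def)
    finally show ?thesis .
  qed
  ultimately show ?thesis
    by (simp add: prod_eq_iff fun_eq_iff)
qed

end

lemma image_has_local_units_if_continuous_extension: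
  fixes f :: "'a::ring \<Rightarrow> 'b::ring" and \<phi> :: "'a mult \<Rightarrow> 'b mult"
  assumes "has_local_units TYPE('a)" and "\<phi> mult_one = mult_one"
    and "continuous_map (strict_topology TYPE('a)) (strict_topology TYPE('b)) \<phi>"
    and "extends_hom f \<phi>"
  shows "image_has_local_units f"
  unfolding image_has_local_units_def
proof
  fix b :: 'b
  let ?U = "{n \<in> multipliers TYPE('b). fst n b \<in> {b}} \<inter> {n \<in> multipliers TYPE('b). snd n b \<in> {b}}"
  have "openin (strict_topology TYPE('b)) ?U"
    by (intro openin_Int openin_strict_topology_left openin_strict_topology_right)
  then have "openin (strict_topology TYPE('a)) {m \<in> multipliers TYPE('a). \<phi> m \<in> ?U}"
    using openin_continuous_map_preimage[OF assms(3)] by (simp only: topspace_strict_topology)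
  moreover have "mult_one \<in> {m \<in> multipliers TYPE('a). \<phi> m \<in> ?U}"
    using assms(2) by (simp add: mult_one_in_multipliers, simp add: mult_one_def)
  ultimately obtain S where "finite S" and S: "\<And>n. n \<in> multipliers TYPE('a) \<Longrightarrow>
      \<forall>a\<in>S. fst n a = fst mult_one a \<and> snd n a = snd mult_one a \<Longrightarrow> \<phi> n \<in> ?U"
    by (rule strict_topology_nhds) blast
  obtain w where "\<forall>a\<in>S. w * a = a \<and> a * w = a"
    using finite_local_unit[OF assms(1) \<open>finite S\<close>] by blast
  then have "\<phi> (mu w) \<in> ?U"
    by (intro S mu_in_multipliers) (simp add: mu_def mult_one_def)
  then show "\<exists>u. f u * b = b \<and> b * f u = b"
    using assms(4) unfolding extends_hom_def mu_def by auto
qed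

theorem mainTheorem11:
  fixes f :: "'a::ring \<Rightarrow> 'b::ring"
  assumes "has_local_units TYPE('a)" and "has_local_units TYPE('b)"
    and "is_ring_hom f"
  shows "(non_degenerate f \<longleftrightarrow>
           (\<exists>\<phi>. mult_ring_hom TYPE('a) TYPE('b) \<phi> \<and> \<phi> mult_one = mult_one \<and>
                continuous_map (strict_topology TYPE('a)) (strict_topology TYPE('b)) \<phi> \<and>
                extends_hom f \<phi>))
       \<and> (non_degenerate f \<longrightarrow>
           (\<exists>\<phi>. mult_ring_hom TYPE('a) TYPE('b) \<phi> \<and> extends_hom f \<phi> \<and>
              (\<forall>\<psi>. mult_ring_hom TYPE('a) TYPE('b) \<psi> \<and> extends_hom f \<psi> \<longrightarrow>
                  (\<forall>m\<in>multipliers TYPE('a). \<psi> m = \<phi> m))))"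
proof -
  have nd_iff: "non_degenerate f \<longleftrightarrow> image_has_local_units f"
    using assms(1,3) by (rule non_degenerate_iff_image_has_local_units)
  have "\<exists>\<phi>. mult_ring_hom TYPE('a) TYPE('b) \<phi> \<and> \<phi> mult_one = mult_one \<and>
      continuous_map (strict_topology TYPE('a)) (strict_topology TYPE('b)) \<phi> \<and> extends_hom f \<phi> \<and>
      (\<forall>\<psi>. mult_ring_hom TYPE('a) TYPE('b) \<psi> \<and> extends_hom f \<psi> \<longrightarrow>
         (\<forall>m\<in>multipliers TYPE('a). \<psi> m = \<phi> m))"
    if "non_degenerate f"
  proof -
    interpret multiplier_extension f
      using assms(3) that nd_iff by unfold_locales simp_all
    show ?thesis
      using extension_mult_ring_hom extension_mult_one continuous_map_extension
        extension_extends_hom extension_unique by blast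
  qed
  moreover have "non_degenerate f"
    if "\<exists>\<phi>. \<phi> mult_one = mult_one \<and>
      continuous_map (strict_topology TYPE('a)) (strict_topology TYPE('b)) \<phi> \<and> extends_hom f \<phi>"
    using that nd_iff image_has_local_units_if_continuous_extension[OF assms(1)] by blast
  ultimately show ?thesis by blast
qed

end
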